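(* Let $G_1$ and $G_2$ be two graphs of order $n$ which have the same Laplacian spectra but different degree sequences. Let $\Gamma$ be an arbitrary graph, where, if $G_1$ or $G_2$ has an isolated vertex, $\Gamma$ is assumed to have at least $2$ vertices. Then $G_1\vee\Gamma$ and $G_2\vee\Gamma$ have the same Laplacian spectra for every such $\Gamma$. Moreover, there is a finite set $S$ consisting of at most $n-1$ integers such that $Z_{G_1\vee\Gamma}\ne Z_{G_2\vee\Gamma}$ for every such $\Gamma$ whose order does not lie in $S$.
   Context: Graphs are finite and simple. The Laplacian of a graph is $L=D-A$ ($D$ degree matrix, $A$ adjacency matrix). The join $G\vee\Gamma$ is the disjoint union of $G$ and $\Gamma$ with all edges between a vertex of $G$ and a vertex of $\Gamma$ added. $Z_G$ is the Ihara zeta function: for a graph with $n_G$ vertices and $m_G$ edges, $Z_G(t)=(1-t^2)^{n_G-m_G}\det(I-tA+t^2(D-I))^{-1}$ (equivalently the product $\prod_{[\gamma]}(1-t^{\ell(\gamma)})^{-1}$ over rotation classes of primitive closed geodesics). *)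

theory Defs
  imports "HOL-Computational_Algebra.Formal_Power_Series" "HOL-Computational_Algebra.Polynomial"
    "HOL-Combinatorics.Permutations" "HOL-Library.Multiset"
begin

definition graph :: "'a set \<Rightarrow> ('a \<Rightarrow> 'a \<Rightarrow> bool) \<Rightarrow> bool" where
  "graph V E \<longleftrightarrow> finite V \<and> (\<forall>x y. E x y \<longrightarrow> x \<in> V \<and> y \<in> V \<and> x \<noteq> y \<and> E y x)"

definition deg :: "'a set \<Rightarrow> ('a \<Rightarrow> 'a \<Rightarrow> bool) \<Rightarrow> 'a \<Rightarrow> nat" where
  "deg V E x = card {y \<in> V. E x y}"

definition num_edges :: "('a \<Rightarrow> 'a \<Rightarrow> bool) \<Rightarrow> nat" where
  "num_edges E = card {{x, y} | x y. E x y}"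

definition degree_seq :: "'a set \<Rightarrow> ('a \<Rightarrow> 'a \<Rightarrow> bool) \<Rightarrow> nat multiset" where
  "degree_seq V E = image_mset (deg V E) (mset_set V)"

definition has_isolated :: "'a set \<Rightarrow> ('a \<Rightarrow> 'a \<Rightarrow> bool) \<Rightarrow> bool" where
  "has_isolated V E \<longleftrightarrow> (\<exists>v \<in> V. deg V E v = 0)"

definition det_on :: "'a set \<Rightarrow> ('a \<Rightarrow> 'a \<Rightarrow> 'r::comm_ring_1) \<Rightarrow> 'r" where
  "det_on V M = (\<Sum>p | p permutes V. of_int (sign p) * (\<Prod>i\<in>V. M i (p i)))"

definition adj_mat :: "('a \<Rightarrow> 'a \<Rightarrow> bool) \<Rightarrow> 'a \<Rightarrow> 'a \<Rightarrow> real" where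
  "adj_mat E x y = (if E x y then 1 else 0)"

definition laplacian :: "'a set \<Rightarrow> ('a \<Rightarrow> 'a \<Rightarrow> bool) \<Rightarrow> 'a \<Rightarrow> 'a \<Rightarrow> real" where
  "laplacian V E x y = (if x = y then real (deg V E x) else 0) - adj_mat E x y"

text \<open>Characteristic polynomial det(xI - L) and the Laplacian spectrum
  (multiset of its roots; L is real symmetric so all eigenvalues are real).\<close>
definition lap_charpoly :: "'a set \<Rightarrow> ('a \<Rightarrow> 'a \<Rightarrow> bool) \<Rightarrow> real poly" where
  "lap_charpoly V E = det_on V (\<lambda>x y. (if x = y then [:0, 1:] else 0) - [:laplacian V E x y:])"

definition lap_spectrum :: "'a set \<Rightarrow> ('a \<Rightarrow> 'a \<Rightarrow> bool) \<Rightarrow> real multiset" where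
  "lap_spectrum V E = proots (lap_charpoly V E)"

definition ihara_zeta :: "'a set \<Rightarrow> ('a \<Rightarrow> 'a \<Rightarrow> bool) \<Rightarrow> real fps" where
  "ihara_zeta V E =
     (let q = 1 - fps_X ^ 2;
          n = card V; m = num_edges E;
          pre = (if m \<le> n then q ^ (n - m) else inverse (q ^ (m - n)))
      in pre * inverse (det_on V (\<lambda>x y.
            (if x = y then 1 else 0) - fps_const (adj_mat E x y) * fps_X
            + fps_const ((if x = y then real (deg V E x) else 0) - (if x = y then 1 else 0)) * fps_X ^ 2)))"

definition join_V :: "'a set \<Rightarrow> 'b set \<Rightarrow> ('a + 'b) set" where
  "join_V V W = Inl ` V \<union> Inr ` W"

fun join_E :: "'a set \<Rightarrow> ('a \<Rightarrow> 'a \<Rightarrow> bool) \<Rightarrow> 'b set \<Rightarrow> ('b \<Rightarrow> 'b \<Rightarrow> bool)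
    \<Rightarrow> 'a + 'b \<Rightarrow> 'a + 'b \<Rightarrow> bool" where
  "join_E V E W F (Inl x) (Inl y) = E x y"
| "join_E V E W F (Inr x) (Inr y) = F x y"
| "join_E V E W F (Inl x) (Inr y) = (x \<in> V \<and> y \<in> W)"
| "join_E V E W F (Inr x) (Inl y) = (x \<in> W \<and> y \<in> V)"

end

theory Submission
  imports Defs "Jordan_Normal_Form.Determinant" "HOL-Computational_Algebra.Polynomial_FPS"
begin

text \<open>Order the vertices of the join so that those of \<open>G\<close> come first. Then \<open>xI - L\<close> has
  all-ones off-diagonal blocks, and its diagonal blocks are those of \<open>G\<close> and of \<open>\<Gamma>\<close> with \<open>x\<close>
  shifted by the order of the other graph. Every row of a diagonal block sums to the same
  linear polynomial, so the determinant factors: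
  \<open>(x - m) (x - n) \<phi>(G \<or> \<Gamma>, x) = x (x - n - m) \<phi>(G, x - m) \<phi>(\<Gamma>, x - n)\<close>.
  Hence the Laplacian spectrum of the join depends on \<open>G\<close> only through its spectrum and order.

  The reciprocal of the zeta function is \<open>(1 - t^2)^(|E| - |V|) det(I - tA + t^2 (D - I))\<close>, and
  the coefficient of \<open>t^(2|V|)\<close> in the determinant is \<open>det(D - I)\<close>, the product of all
  \<open>d(v) - 1\<close>.
  In the join a vertex of \<open>G\<close> has degree \<open>d(v) + k\<close> with \<open>k = |\<Gamma>|\<close>, so equal zeta functions
  force the products of \<open>d(v) + k - 1\<close> over \<open>G\<^sub>1\<close> and over \<open>G\<^sub>2\<close> to agree, provided no factor
  vanishes; this is what the hypothesis on isolated vertices guarantees. As polynomials in \<open>k\<close>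
  both products are monic of degree \<open>n\<close>, and their roots determine the degree sequences, so
  their difference is nonzero of degree at most \<open>n - 1\<close> and has at most \<open>n - 1\<close> integer roots.\<close>

section \<open>Determinants over finite index sets\<close>

lemma det_on_cong:
  assumes "\<And>i j. i \<in> V \<Longrightarrow> j \<in> V \<Longrightarrow> M i j = M' i j"
  shows "det_on V M = det_on V M'"
  unfolding det_on_def
proof (intro sum.cong refl arg_cong2[where f="(*)"] prod.cong)
  fix p i assume "p \<in> {p. p permutes V}" "i \<in> V"
  then show "M i (p i) = M' i (p i)" using assms permutes_in_image by fastforce
qed

lemma det_on_reindex:
  assumes bij: "bij_betw f U V" and fin: "finite U"
  shows "det_on V M = det_on U (\<lambda>i j. M (f i) (f j))"
proof -
  define g where "g = inv_into U f"
  have bijg: "bij_betw g V U" unfolding g_def by (rule bij_betw_inv_into[OF bij])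
  have gf: "\<And>x. x \<in> U \<Longrightarrow> g (f x) = x" and fg: "\<And>y. y \<in> V \<Longrightarrow> f (g y) = y"
    using bij unfolding g_def by (simp_all add: bij_betw_inv_into_left bij_betw_inv_into_right)
  have injf: "inj_on f U" using bij bij_betw_def by blast
  show ?thesis unfolding det_on_def
  proof (rule sym, rule sum.reindex_bij_witness[where j="map_permutation U f" and i="map_permutation V g"])
    fix p assume "p \<in> {p. p permutes V}"
    then show "map_permutation U f (map_permutation V g p) = p"
      and "map_permutation V g p \<in> {p. p permutes U}"
      using map_permutation_compose_inv[OF bijg _ fg] map_permutation_permutes[OF bijg] by auto
  next
    fix q assume "q \<in> {p. p permutes U}"
    then have q: "q permutes U" by simp
    show "map_permutation V g (map_permutation U f q) = q"
      and "map_permutation U f q \<in> {p. p permutes V}"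
      using map_permutation_compose_inv[OF bij q gf] map_permutation_permutes[OF bij q] by auto
    have "(\<Prod>i\<in>V. M i (map_permutation U f q i)) = (\<Prod>i\<in>U. M (f i) (map_permutation U f q (f i)))"
      using prod.reindex_bij_betw[OF bij, of "\<lambda>i. M i (map_permutation U f q i)"] by simp
    also have "\<dots> = (\<Prod>i\<in>U. M (f i) (f (q i)))"
      using map_permutation_apply[OF injf] by (intro prod.cong refl) auto
    finally show "of_int (sign (map_permutation U f q)) * (\<Prod>i\<in>V. M i (map_permutation U f q i)) =
       of_int (sign q) * (\<Prod>i\<in>U. M (f i) (f (q i)))"
      using sign_map_permutation[OF injf q fin] by simp
  qed
qed

lemma det_on_atLeastLessThan: "det_on {0..<n} M = det (mat n n (\<lambda>(i,j). M i j))"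
  unfolding det_on_def det_def
  by (auto intro!: sum.cong arg_cong2[where f="(*)"] prod.cong simp: permutes_in_image)

lemma det_on_diagonal:
  assumes fin: "finite V"
  shows "det_on V (\<lambda>i j. if i = j then f i else 0) = (\<Prod>i\<in>V. f i)"
proof -
  have "of_int (sign p) * (\<Prod>i\<in>V. if i = p i then f i else 0) = (if p = id then \<Prod>i\<in>V. f i else 0)"
    if p: "p permutes V" for p
  proof (cases "p = id")
    case False
    then obtain i where i: "p i \<noteq> i" by (metis eq_id_iff)
    then have "i \<in> V" using p permutes_not_in by metis
    then have "(\<Prod>i\<in>V. if i = p i then f i else 0) = 0"
      using fin i by (intro prod_zero bexI[of _ i]) auto
    then show ?thesis using False by simp
  qed simp
  then have "det_on V (\<lambda>i j. if i = j then f i else 0)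
      = (\<Sum>p | p permutes V. if p = id then \<Prod>i\<in>V. f i else 0)"
    unfolding det_on_def by (intro sum.cong) auto
  then show ?thesis
    using permutes_id[of V] by (simp add: sum.delta[OF finite_permutations[OF fin]])
qed

lemma det_on_pcompose: "det_on V (\<lambda>i j. pcompose (M i j) q) = pcompose (det_on V M) q"
  unfolding det_on_def
  by (simp add: pcompose_sum pcompose_mult pcompose_prod of_int_poly pcompose_smult)

lemma det_on_fps_of_poly: "det_on V (\<lambda>i j. fps_of_poly (M i j)) = fps_of_poly (det_on V M)"
  unfolding det_on_def
  by (simp add: fps_of_poly_sum fps_of_poly_mult fps_of_poly_prod of_int_poly fps_of_poly_smult fps_of_int)

lemma coeff_mult_at_degree_bounds:
  fixes p q :: "'a::comm_semiring_1 poly"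
  assumes "degree p \<le> d1" "degree q \<le> d2"
  shows "coeff (p * q) (d1 + d2) = coeff p d1 * coeff q d2"
proof -
  have "coeff p i * coeff q (d1 + d2 - i) = (if i = d1 then coeff p d1 * coeff q d2 else 0)" for i
    using assms by (cases i d1 rule: linorder_cases) (auto simp: coeff_eq_0)
  then show ?thesis by (simp add: coeff_mult)
qed

lemma coeff_prod_at_degree_bound:
  fixes f :: "'b \<Rightarrow> 'a::comm_semiring_1 poly"
  assumes "finite I" "\<And>i. i \<in> I \<Longrightarrow> degree (f i) \<le> k"
  shows "coeff (\<Prod>i\<in>I. f i) (k * card I) = (\<Prod>i\<in>I. coeff (f i) k)
    \<and> degree (\<Prod>i\<in>I. f i) \<le> k * card I"
  using assms
proof (induction I rule: finite_induct)
  case (insert a F)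
  then have IH: "coeff (\<Prod>i\<in>F. f i) (k * card F) = (\<Prod>i\<in>F. coeff (f i) k)"
      "degree (\<Prod>i\<in>F. f i) \<le> k * card F" and da: "degree (f a) \<le> k" by auto
  have "degree (f a * (\<Prod>i\<in>F. f i)) \<le> k + k * card F"
    using degree_mult_le[of "f a"] da IH(2) by (meson add_mono order_trans)
  then show ?case
    using insert coeff_mult_at_degree_bounds[OF da IH(2)] IH(1) by simp
qed simp

lemma
  fixes M :: "'b \<Rightarrow> 'b \<Rightarrow> 'a::comm_ring_1 poly"
  assumes fin: "finite V" and deg: "\<And>i j. i \<in> V \<Longrightarrow> j \<in> V \<Longrightarrow> degree (M i j) \<le> k"
  shows coeff_det_on_at_degree_bound:
      "coeff (det_on V M) (k * card V) = det_on V (\<lambda>i j. coeff (M i j) k)"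
    and degree_det_on_le: "degree (det_on V M) \<le> k * card V"
proof -
  have summand: "coeff (\<Prod>i\<in>V. M i (p i)) (k * card V) = (\<Prod>i\<in>V. coeff (M i (p i)) k)
      \<and> degree (\<Prod>i\<in>V. M i (p i)) \<le> k * card V" if "p permutes V" for p
    using that by (intro coeff_prod_at_degree_bound[OF fin] deg) (auto simp: permutes_in_image)
  show "coeff (det_on V M) (k * card V) = det_on V (\<lambda>i j. coeff (M i j) k)"
    unfolding det_on_def coeff_sum using summand by (simp add: of_int_poly)
  show "degree (det_on V M) \<le> k * card V"
    unfolding det_on_def
  proof (rule degree_sum_le)
    fix p assume "p \<in> {p. p permutes V}"
    then show "degree (of_int (sign p) * (\<Prod>i\<in>V. M i (p i))) \<le> k * card V"
      using summand degree_mult_le[of "of_int (sign p)" "\<Prod>i\<in>V. M i (p i)"] by fastforce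
  qed (rule finite_permutations[OF fin])
qed

section \<open>A block determinant\<close>

definition sum_into_first_col_mat :: "nat \<Rightarrow> 'a::semiring_1 mat" where
  "sum_into_first_col_mat m = mat m m (\<lambda>(i,j). if i = j \<or> j = 0 then 1 else 0)"

definition arrow_mat :: "nat \<Rightarrow> 'a \<Rightarrow> 'a \<Rightarrow> 'a \<Rightarrow> 'a::comm_ring_1 mat" where
  "arrow_mat m c d a = mat m m (\<lambda>(i,j). if j = 0 then (if i = 0 then c else 0)
     else if i = 0 then d else if i = j then a else 0)"

lemma sum_into_first_col_mat_carrier: "sum_into_first_col_mat m \<in> carrier_mat m m"
  and arrow_mat_carrier: "arrow_mat m c d a \<in> carrier_mat m m"
  by (simp_all add: sum_into_first_col_mat_def arrow_mat_def)

lemma det_sum_into_first_col_mat: "det (sum_into_first_col_mat m :: 'a::comm_ring_1 mat) = 1"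
proof -
  have "det (sum_into_first_col_mat m :: 'a mat) = prod_list (diag_mat (sum_into_first_col_mat m))"
    by (rule det_lower_triangular[OF _ sum_into_first_col_mat_carrier])
      (auto simp: sum_into_first_col_mat_def)
  also have "diag_mat (sum_into_first_col_mat m :: 'a mat) = replicate m 1"
    by (auto simp: diag_mat_def sum_into_first_col_mat_def intro!: nth_equalityI)
  finally show ?thesis by simp
qed

lemma det_arrow_mat:
  assumes "m > 0"
  shows "det (arrow_mat m c d a) = c * a ^ (m - 1)"
proof -
  have "det (arrow_mat m c d a) = prod_list (diag_mat (arrow_mat m c d a))"
    by (rule det_upper_triangular[OF _ arrow_mat_carrier]) (auto simp: arrow_mat_def)
  also have "diag_mat (arrow_mat m c d a) = c # replicate (m - 1) a"
    using assms by (auto simp: diag_mat_def arrow_mat_def nth_Cons' intro!: nth_equalityI)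
  finally show ?thesis by simp
qed

lemma mult_sum_into_first_col_mat:
  fixes M :: "'a::comm_ring_1 mat"
  assumes M: "M \<in> carrier_mat m m"
  shows "M * sum_into_first_col_mat m
    = mat m m (\<lambda>(i,j). if j = 0 then (\<Sum>k<m. M $$ (i,k)) else M $$ (i,j))"
proof (rule eq_matI)
  fix i j assume "i < dim_row (mat m m (\<lambda>(i,j). if j = 0 then (\<Sum>k<m. M $$ (i,k)) else M $$ (i,j)))"
    and "j < dim_col (mat m m (\<lambda>(i,j). if j = 0 then (\<Sum>k<m. M $$ (i,k)) else M $$ (i,j)))"
  then have i: "i < m" and j: "j < m" by auto
  have "(M * sum_into_first_col_mat m) $$ (i,j) = (\<Sum>k<m. if k = j \<or> j = 0 then M $$ (i,k) else 0)"
    using i j M by (auto simp: scalar_prod_def atLeast0LessThan sum_into_first_col_mat_def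
      intro!: sum.cong)
  then show "(M * sum_into_first_col_mat m) $$ (i,j)
    = mat m m (\<lambda>(i,j). if j = 0 then (\<Sum>k<m. M $$ (i,k)) else M $$ (i,j)) $$ (i,j)"
    using i j by (cases "j = 0") auto
qed (use M in \<open>auto simp: sum_into_first_col_mat_def\<close>)

lemma mult_arrow_mat:
  fixes Z :: "'a::comm_ring_1 mat"
  assumes Z: "Z \<in> carrier_mat m m" and ones: "\<And>i. i < m \<Longrightarrow> Z $$ (i,0) = 1"
  shows "Z * arrow_mat m c d a = mat m m (\<lambda>(i,j). if j = 0 then c else d + a * Z $$ (i,j))"
proof (rule eq_matI)
  fix i j assume "i < dim_row (mat m m (\<lambda>(i,j). if j = 0 then c else d + a * Z $$ (i,j)))"
    and "j < dim_col (mat m m (\<lambda>(i,j). if j = 0 then c else d + a * Z $$ (i,j)))"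
  then have i: "i < m" and j: "j < m" by auto
  have "(Z * arrow_mat m c d a) $$ (i,j) = (\<Sum>k<m. Z $$ (i,k) * arrow_mat m c d a $$ (k,j))"
    using i j Z by (simp add: scalar_prod_def atLeast0LessThan arrow_mat_def)
  also have "\<dots> = (if j = 0 then c else d + a * Z $$ (i,j))"
  proof (cases "j = 0")
    case True
    then have "(\<Sum>k<m. Z $$ (i,k) * arrow_mat m c d a $$ (k,j)) = (\<Sum>k<m. if k = 0 then c else 0)"
      using i ones by (intro sum.cong) (auto simp: arrow_mat_def)
    then show ?thesis using True i by simp
  next
    case False
    then have "(\<Sum>k<m. Z $$ (i,k) * arrow_mat m c d a $$ (k,j))
        = (\<Sum>k<m. (if k = 0 then d else 0) + (if k = j then a * Z $$ (i,j) else 0))"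
      using i j ones by (intro sum.cong) (auto simp: arrow_mat_def)
    then show ?thesis using False i j by (simp add: sum.distrib)
  qed
  finally show "(Z * arrow_mat m c d a) $$ (i,j)
    = mat m m (\<lambda>(i,j). if j = 0 then c else d + a * Z $$ (i,j)) $$ (i,j)"
    using i j by simp
qed (use Z in \<open>auto simp: arrow_mat_def\<close>)

text \<open>Adding all columns to the first one and factoring out the first column reduces
  both determinants to the same matrix \<open>Z\<close>, whose first column consists of ones.\<close>
lemma det_const_row_sums_minus_const:
  fixes B :: "'a::idom mat" and a b :: 'a
  assumes B: "B \<in> carrier_mat m m" and m: "m > 0"
    and rowB: "\<And>i. i < m \<Longrightarrow> (\<Sum>j<m. B $$ (i,j)) = b"
  shows "b * det (mat m m (\<lambda>(i,j). a * B $$ (i,j) - of_nat n))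
       = (a * b - of_nat n * of_nat m) * a ^ (m - 1) * det B"
proof -
  define c where "c = a * b - of_nat n * of_nat m"
  define C where "C = mat m m (\<lambda>(i,j). a * B $$ (i,j) - of_nat n)"
  define Y where "Y = (sum_into_first_col_mat m :: 'a mat)"
  define Z where "Z = mat m m (\<lambda>(i,j). if j = 0 then 1 else B $$ (i,j))"
  have C: "C \<in> carrier_mat m m" and Y: "Y \<in> carrier_mat m m" and Z: "Z \<in> carrier_mat m m"
    unfolding C_def Y_def Z_def by (auto simp: sum_into_first_col_mat_carrier)
  have rowC: "(\<Sum>k<m. a * B $$ (i,k) - of_nat n) = c" if "i < m" for i
    using rowB[OF that] by (simp add: c_def sum_subtractf sum_distrib_left[symmetric])
  have det_Z_mult: "det (M * Y) = det Z * det (arrow_mat m x y z)"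
    if "M \<in> carrier_mat m m" "M * Y = Z * arrow_mat m x y z" for M x y z
    using det_mult[OF that(1) Y] det_mult[OF Z arrow_mat_carrier] that(2)
    by (simp add: Y_def det_sum_into_first_col_mat)
  have "B * Y = Z * arrow_mat m b 0 1"
    unfolding Y_def mult_sum_into_first_col_mat[OF B]
    by (subst mult_arrow_mat[OF Z]) (auto simp: Z_def rowB)
  from det_Z_mult[OF B this] have "det B = det Z * b"
    using det_mult[OF B Y] by (simp add: det_arrow_mat[OF m] Y_def det_sum_into_first_col_mat)
  moreover have "C * Y = Z * arrow_mat m c (- of_nat n) a"
    unfolding Y_def mult_sum_into_first_col_mat[OF C]
    by (subst mult_arrow_mat[OF Z]) (auto intro!: cong_mat simp: Z_def rowC C_def)
  from det_Z_mult[OF C this] have "det C = det Z * (c * a ^ (m - 1))"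
    using det_mult[OF C Y] by (simp add: det_arrow_mat[OF m] Y_def det_sum_into_first_col_mat)
  ultimately show ?thesis unfolding C_def[symmetric] c_def[symmetric] by (simp add: ac_simps)
qed

lemma det_four_block_ones_const_row_sums:
  fixes A B :: "'a::idom mat" and a b :: 'a
  assumes A: "A \<in> carrier_mat n n" and B: "B \<in> carrier_mat m m" and m: "m > 0" and a: "a \<noteq> 0"
    and rowA: "\<And>i. i < n \<Longrightarrow> (\<Sum>j<n. A $$ (i,j)) = a"
    and rowB: "\<And>i. i < m \<Longrightarrow> (\<Sum>j<m. B $$ (i,j)) = b"
  shows "a * b * det (four_block_mat A (mat n m (\<lambda>_. 1)) (mat m n (\<lambda>_. 1)) B)
       = (a * b - of_nat n * of_nat m) * det A * det B"
proof -
  define J where "J = (mat n m (\<lambda>_. 1) :: 'a mat)"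
  define J' where "J' = (mat m n (\<lambda>_. 1) :: 'a mat)"
  define N where "N = (mat n m (\<lambda>_. -1) :: 'a mat)"
  define C where "C = mat m m (\<lambda>(i,j). a * B $$ (i,j) - of_nat n)"
  define P where "P = four_block_mat A J J' B"
  define X where "X = four_block_mat (1\<^sub>m n) N (0\<^sub>m m n) (a \<cdot>\<^sub>m 1\<^sub>m m)"
  have c: "J \<in> carrier_mat n m" "J' \<in> carrier_mat m n" "N \<in> carrier_mat n m" "C \<in> carrier_mat m m"
    unfolding J_def J'_def N_def C_def by auto
  have P: "P \<in> carrier_mat (n+m) (n+m)" and X: "X \<in> carrier_mat (n+m) (n+m)"
    unfolding P_def X_def using A B c by auto
  have scale: "J * (a \<cdot>\<^sub>m 1\<^sub>m m) = a \<cdot>\<^sub>m J" "B * (a \<cdot>\<^sub>m 1\<^sub>m m) = a \<cdot>\<^sub>m B"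
    using mult_smult_distrib[OF c(1) one_carrier_mat] mult_smult_distrib[OF B one_carrier_mat] c B by auto
  have "A * N + J * (a \<cdot>\<^sub>m 1\<^sub>m m) = 0\<^sub>m n m"
  proof (rule eq_matI)
    fix i j assume "i < dim_row (0\<^sub>m n m :: 'a mat)" "j < dim_col (0\<^sub>m n m :: 'a mat)"
    then have i: "i < n" and j: "j < m" by auto
    have "(A * N) $$ (i,j) = - (\<Sum>k<n. A $$ (i,k))"
      using i j A by (simp add: scalar_prod_def atLeast0LessThan N_def sum_negf)
    then show "(A * N + J * (a \<cdot>\<^sub>m 1\<^sub>m m)) $$ (i,j) = 0\<^sub>m n m $$ (i,j)"
      using i j A c rowA[OF i] by (simp add: scale J_def)
  qed (use A c scale in auto)
  moreover have "J' * N + B * (a \<cdot>\<^sub>m 1\<^sub>m m) = C"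
  proof (rule eq_matI)
    fix i j assume "i < dim_row C" "j < dim_col C"
    then have i: "i < m" and j: "j < m" using c by auto
    have "(J' * N) $$ (i,j) = - of_nat n"
      using i j by (simp add: scalar_prod_def atLeast0LessThan N_def J'_def)
    then show "(J' * N + B * (a \<cdot>\<^sub>m 1\<^sub>m m)) $$ (i,j) = C $$ (i,j)"
      using i j B c by (simp add: scale C_def)
  qed (use B c scale in auto)
  ultimately have "P * X = four_block_mat A (0\<^sub>m n m) J' C"
    unfolding P_def X_def using A B c by (subst mult_four_block_mat[OF A c(1) c(2) B]) auto
  then have PX: "det P * a ^ m = det A * det C"
    using det_mult[OF P X] det_four_block_mat_upper_right_zero[OF A refl c(2) c(4)]
      det_four_block_mat_lower_left_zero[of "1\<^sub>m n" n N m "0\<^sub>m m n" "a \<cdot>\<^sub>m 1\<^sub>m m"] c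
    by (simp add: X_def)
  have "a ^ (m - 1) * (a * b * det P) = b * (det P * a ^ m)"
    using m by (cases m) (simp_all add: ac_simps)
  also have "\<dots> = det A * (b * det C)" by (simp add: PX ac_simps)
  also have "b * det C = (a * b - of_nat n * of_nat m) * a ^ (m - 1) * det B"
    unfolding C_def by (rule det_const_row_sums_minus_const[OF B m rowB])
  finally have "a ^ (m - 1) * (a * b * det P) = a ^ (m - 1) * ((a * b - of_nat n * of_nat m) * det A * det B)"
    by (simp add: ac_simps)
  then show ?thesis using a unfolding P_def J_def J'_def by simp
qed

lemma pcompose_dvd_pcompose: "p dvd q \<Longrightarrow> pcompose p r dvd pcompose q r"
  by (auto simp: dvd_def pcompose_mult)

lemma pcompose_power_left: "pcompose (p ^ k) r = pcompose p r ^ k"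
  by (induction k) (simp_all add: pcompose_mult pcompose_1)

lemma order_pcompose_shift:
  fixes p :: "'a::idom poly"
  assumes p: "p \<noteq> 0"
  shows "order x (pcompose p [:-c, 1:]) = order (x - c) p"
proof -
  have q: "pcompose p [:-c, 1:] \<noteq> 0" using pcompose_eq_0[of p "[:-c, 1:]"] p by auto
  have unshift: "pcompose (pcompose p [:-c, 1:]) [:c, 1:] = p"
    by (simp add: pcompose_assoc[symmetric] pcompose_pCons)
  have "[:-x, 1:] ^ k dvd pcompose p [:-c, 1:]" if "[:-(x - c), 1:] ^ k dvd p" for k
    using pcompose_dvd_pcompose[OF that, of "[:-c, 1:]"] by (simp add: pcompose_power_left pcompose_pCons)
  moreover have "[:-(x - c), 1:] ^ k dvd p" if "[:-x, 1:] ^ k dvd pcompose p [:-c, 1:]" for k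
    using pcompose_dvd_pcompose[OF that, of "[:c, 1:]"] by (simp add: pcompose_power_left pcompose_pCons unshift)
  ultimately show ?thesis
    using order_divides[of "x - c" _ p] order_divides[of x _ "pcompose p [:-c, 1:]"] p q
    by (metis antisym order_1)
qed

lemma proots_pcompose_shift_eq:
  fixes p q :: "'a::idom poly"
  assumes "proots p = proots q"
  shows "proots (pcompose p [:-c, 1:]) = proots (pcompose q [:-c, 1:])"
proof (rule multiset_eqI)
  have count: "count (proots (pcompose r [:-c, 1:])) x = count (proots r) (x - c)" for r :: "'a poly" and x
    using order_pcompose_shift[of r x c] by (cases "r = 0") (simp_all add: pcompose_eq_0_iff)
  show "count (proots (pcompose p [:-c, 1:])) x = count (proots (pcompose q [:-c, 1:])) x" for x
    unfolding count assms ..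
qed

section \<open>The Laplacian spectrum of a join\<close>

definition lap_char_matrix :: "'a set \<Rightarrow> ('a \<Rightarrow> 'a \<Rightarrow> bool) \<Rightarrow> 'a \<Rightarrow> 'a \<Rightarrow> real poly" where
  "lap_char_matrix V E x y = (if x = y then [:0, 1:] else 0) - [:laplacian V E x y:]"

lemma lap_charpoly_eq_det_on: "lap_charpoly V E = det_on V (lap_char_matrix V E)"
  unfolding lap_charpoly_def lap_char_matrix_def ..

lemma graph_finite: "graph V E \<Longrightarrow> finite V"
  unfolding graph_def by simp

lemma sum_adj_mat: "graph V E \<Longrightarrow> (\<Sum>v\<in>V. Defs.adj_mat E u v) = real (deg V E u)"
  unfolding Defs.adj_mat_def deg_def by (simp add: sum.If_cases graph_finite Collect_conj_eq)

lemma sum_lap_char_matrix: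
  assumes G: "graph V E" and u: "u \<in> V"
  shows "(\<Sum>v\<in>V. lap_char_matrix V E u v) = [:0, 1:]"
proof -
  have fin: "finite V" using G graph_finite by blast
  have "(\<Sum>v\<in>V. laplacian V E u v) = real (deg V E u) - (\<Sum>v\<in>V. Defs.adj_mat E u v)"
    using u fin by (simp add: laplacian_def sum_subtractf)
  then have "(\<Sum>v\<in>V. laplacian V E u v) = 0" using sum_adj_mat[OF G] by simp
  then show ?thesis
    using u fin by (simp add: lap_char_matrix_def sum_subtractf sum_to_poly)
qed

lemma coeff_lap_charpoly_card:
  assumes fin: "finite V"
  shows "coeff (lap_charpoly V E) (card V) = 1"
proof -
  have "coeff (lap_charpoly V E) (1 * card V) = det_on V (\<lambda>i j. coeff (lap_char_matrix V E i j) 1)"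
    unfolding lap_charpoly_eq_det_on
    by (rule coeff_det_on_at_degree_bound[OF fin]) (auto simp: lap_char_matrix_def)
  also have "\<dots> = det_on V (\<lambda>i j. if i = j then 1 else 0)"
    by (rule det_on_cong) (auto simp: lap_char_matrix_def)
  also have "\<dots> = 1" using det_on_diagonal[OF fin, of "\<lambda>_. 1"] by simp
  finally show ?thesis by simp
qed

lemma lap_charpoly_nonzero: "finite V \<Longrightarrow> lap_charpoly V E \<noteq> 0"
  using coeff_lap_charpoly_card[of V E] by auto

lemma finite_join_V: "finite V \<Longrightarrow> finite W \<Longrightarrow> finite (join_V V W)"
  by (simp add: join_V_def)

lemma card_join_V: "finite V \<Longrightarrow> finite W \<Longrightarrow> card (join_V V W) = card V + card W"
  unfolding join_V_def by (subst card_Un_disjoint) (auto simp: card_image)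

lemma deg_join_Inl:
  assumes G: "graph V E" and H: "graph W F" and u: "u \<in> V"
  shows "deg (join_V V W) (join_E V E W F) (Inl u) = deg V E u + card W"
proof -
  have "{y \<in> join_V V W. join_E V E W F (Inl u) y} = Inl ` {v \<in> V. E u v} \<union> Inr ` W"
    using u by (auto simp: join_V_def elim: join_E.elims)
  moreover have "card (Inl ` {v \<in> V. E u v} \<union> Inr ` W) = card {v \<in> V. E u v} + card W"
    using graph_finite[OF G] graph_finite[OF H] by (subst card_Un_disjoint) (auto simp: card_image)
  ultimately show ?thesis unfolding deg_def by simp
qed

lemma deg_join_Inr:
  assumes G: "graph V E" and H: "graph W F" and w: "w \<in> W"
  shows "deg (join_V V W) (join_E V E W F) (Inr w) = deg W F w + card V"
proof -
  have "{y \<in> join_V V W. join_E V E W F (Inr w) y} = Inl ` V \<union> Inr ` {v \<in> W. F w v}"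
    using w by (auto simp: join_V_def elim: join_E.elims)
  moreover have "card (Inl ` V \<union> Inr ` {v \<in> W. F w v}) = card V + card {v \<in> W. F w v}"
    using graph_finite[OF G] graph_finite[OF H] by (subst card_Un_disjoint) (auto simp: card_image)
  ultimately show ?thesis unfolding deg_def by simp
qed

lemma lap_char_matrix_join:
  assumes G: "graph V E" and H: "graph W F"
  shows "\<lbrakk>u \<in> V; v \<in> V\<rbrakk> \<Longrightarrow> lap_char_matrix (join_V V W) (join_E V E W F) (Inl u) (Inl v)
      = pcompose (lap_char_matrix V E u v) [:- real (card W), 1:]"
    and "\<lbrakk>w \<in> W; w' \<in> W\<rbrakk> \<Longrightarrow> lap_char_matrix (join_V V W) (join_E V E W F) (Inr w) (Inr w')
      = pcompose (lap_char_matrix W F w w') [:- real (card V), 1:]"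
    and "\<lbrakk>u \<in> V; w \<in> W\<rbrakk> \<Longrightarrow> lap_char_matrix (join_V V W) (join_E V E W F) (Inl u) (Inr w) = 1"
    and "\<lbrakk>u \<in> V; w \<in> W\<rbrakk> \<Longrightarrow> lap_char_matrix (join_V V W) (join_E V E W F) (Inr w) (Inl u) = 1"
  using deg_join_Inl[OF G H] deg_join_Inr[OF G H]
  by (auto simp: lap_char_matrix_def laplacian_def Defs.adj_mat_def pcompose_pCons)

lemma bij_betw_join_V:
  fixes n m :: nat
  assumes f: "bij_betw f {0..<n} V" and g: "bij_betw g {0..<m} W"
  shows "bij_betw (\<lambda>i. if i < n then Inl (f i) else Inr (g (i - n))) {0..<n+m} (join_V V W)"
proof -
  let ?h = "\<lambda>i. if i < n then Inl (f i) else Inr (g (i - n))"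
  have "bij_betw (\<lambda>i. i - n) {n..<n+m} {0..<m}"
    by (rule bij_betw_byWitness[where f'="\<lambda>i. i + n"]) auto
  then have "bij_betw (Inr \<circ> g \<circ> (\<lambda>i. i - n)) {n..<n+m} (Inr ` W)"
    using g by (intro bij_betw_trans) (auto simp: bij_betw_def)
  then have "bij_betw ?h {n..<n+m} (Inr ` W)"
    by (rule bij_betw_cong[THEN iffD1, rotated]) auto
  moreover have "bij_betw (Inl \<circ> f) {0..<n} (Inl ` V)"
    using f by (intro bij_betw_trans) (auto simp: bij_betw_def)
  then have "bij_betw ?h {0..<n} (Inl ` V)"
    by (rule bij_betw_cong[THEN iffD1, rotated]) auto
  ultimately have "bij_betw ?h ({0..<n} \<union> {n..<n+m}) (Inl ` V \<union> Inr ` W)"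
    by (intro bij_betw_combine) auto
  moreover have "{0..<n} \<union> {n..<n+m} = {0..<n+m}" by auto
  ultimately show ?thesis unfolding join_V_def by simp
qed

lemma shifted_lap_char_block:
  fixes c :: real
  assumes G: "graph V E" and f: "bij_betw f {0..<n} V"
  defines "A \<equiv> mat n n (\<lambda>(i,j). pcompose (lap_char_matrix V E (f i) (f j)) [:-c, 1:])"
  shows "det A = pcompose (lap_charpoly V E) [:-c, 1:]"
    and "\<And>i. i < n \<Longrightarrow> (\<Sum>j<n. A $$ (i,j)) = [:-c, 1:]"
proof -
  have "det A = det_on V (\<lambda>u v. pcompose (lap_char_matrix V E u v) [:-c, 1:])"
    unfolding A_def det_on_atLeastLessThan[symmetric] by (rule det_on_reindex[OF f, symmetric]) simp
  then show "det A = pcompose (lap_charpoly V E) [:-c, 1:]"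
    by (simp add: det_on_pcompose lap_charpoly_eq_det_on)
  fix i assume i: "i < n"
  then have fi: "f i \<in> V" using f by (auto simp: bij_betw_def)
  have "(\<Sum>j<n. A $$ (i,j)) = (\<Sum>j\<in>{0..<n}. pcompose (lap_char_matrix V E (f i) (f j)) [:-c, 1:])"
    using i by (simp add: A_def lessThan_atLeast0)
  also have "\<dots> = (\<Sum>v\<in>V. pcompose (lap_char_matrix V E (f i) v) [:-c, 1:])"
    by (rule sum.reindex_bij_betw[OF f])
  finally show "(\<Sum>j<n. A $$ (i,j)) = [:-c, 1:]"
    by (simp add: pcompose_sum[symmetric] sum_lap_char_matrix[OF G fi] pcompose_pCons)
qed

lemma lap_charpoly_join:
  assumes G: "graph V E" and H: "graph W F" and W: "W \<noteq> {}"
  defines "a \<equiv> [:- real (card W), 1:]" and "b \<equiv> [:- real (card V), 1:]"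
  shows "a * b * lap_charpoly (join_V V W) (join_E V E W F)
     = (a * b - of_nat (card V) * of_nat (card W)) * pcompose (lap_charpoly V E) a * pcompose (lap_charpoly W F) b"
proof -
  define n where "n = card V"
  define m where "m = card W"
  have finV: "finite V" and finW: "finite W" using G H graph_finite by blast+
  have m: "m > 0" using finW W unfolding m_def by (simp add: card_gt_0_iff)
  obtain f where f: "bij_betw f {0..<n} V" using ex_bij_betw_nat_finite[OF finV] unfolding n_def by blast
  obtain g where g: "bij_betw g {0..<m} W" using ex_bij_betw_nat_finite[OF finW] unfolding m_def by blast
  have fV: "\<And>i. i < n \<Longrightarrow> f i \<in> V" and gW: "\<And>i. i < m \<Longrightarrow> g i \<in> W"
    using f g by (auto simp: bij_betw_def)
  define h where "h i = (if i < n then Inl (f i) else Inr (g (i - n)))" for i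
  define A where "A = mat n n (\<lambda>(i,j). pcompose (lap_char_matrix V E (f i) (f j)) a)"
  define B where "B = mat m m (\<lambda>(i,j). pcompose (lap_char_matrix W F (g i) (g j)) b)"
  let ?M = "lap_char_matrix (join_V V W) (join_E V E W F)"
  have A: "A \<in> carrier_mat n n" and B: "B \<in> carrier_mat m m" unfolding A_def B_def by auto
  have "lap_charpoly (join_V V W) (join_E V E W F) = det_on {0..<n+m} (\<lambda>i j. ?M (h i) (h j))"
    unfolding lap_charpoly_eq_det_on h_def
    by (rule det_on_reindex[OF bij_betw_join_V[OF f g]]) simp
  also have "\<dots> = det (four_block_mat A (mat n m (\<lambda>_. 1)) (mat m n (\<lambda>_. 1)) B)"
    unfolding det_on_atLeastLessThan using A B fV gW
    by (intro arg_cong[where f=det] eq_matI)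
      (auto simp: h_def A_def B_def a_def b_def n_def m_def lap_char_matrix_join[OF G H])
  finally show ?thesis
    using det_four_block_ones_const_row_sums[OF A B m _ _ _, of a b]
      shifted_lap_char_block[OF G f] shifted_lap_char_block[OF H g]
    unfolding A_def B_def a_def b_def n_def m_def by simp
qed

lemma lap_spectrum_join:
  assumes G: "graph V E" and H: "graph W F" and W: "W \<noteq> {}"
  defines "a \<equiv> [:- real (card W), 1:]" and "b \<equiv> [:- real (card V), 1:]"
  shows "proots (a * b) + lap_spectrum (join_V V W) (join_E V E W F)
      = proots (a * b - of_nat (card V) * of_nat (card W))
        + proots (pcompose (lap_charpoly V E) a) + proots (pcompose (lap_charpoly W F) b)"
proof -
  have finV: "finite V" and finW: "finite W" using G H graph_finite by blast+
  have "poly (a * b - of_nat (card V) * of_nat (card W)) (-1) = 1 + real (card V) + real (card W)"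
    unfolding a_def b_def by (simp add: algebra_simps)
  then have "a * b - of_nat (card V) * of_nat (card W) \<noteq> 0" by (smt (verit) of_nat_0_le_iff poly_0)
  moreover have "a * b \<noteq> 0" "pcompose (lap_charpoly V E) a \<noteq> 0" "pcompose (lap_charpoly W F) b \<noteq> 0"
    "lap_charpoly (join_V V W) (join_E V E W F) \<noteq> 0"
    using lap_charpoly_nonzero finV finW finite_join_V unfolding a_def b_def by (auto simp: pcompose_eq_0_iff)
  ultimately show ?thesis
    using lap_charpoly_join[OF G H W] unfolding lap_spectrum_def a_def b_def
    by (simp add: proots_mult[symmetric])
qed

lemma lap_spectrum_join_eq:
  assumes G1: "graph V1 E1" and G2: "graph V2 E2" and H: "graph W F" and W: "W \<noteq> {}"
    and card: "card V1 = card V2" and spec: "lap_spectrum V1 E1 = lap_spectrum V2 E2"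
  shows "lap_spectrum (join_V V1 W) (join_E V1 E1 W F) = lap_spectrum (join_V V2 W) (join_E V2 E2 W F)"
proof -
  have "proots (pcompose (lap_charpoly V1 E1) [:- real (card W), 1:])
      = proots (pcompose (lap_charpoly V2 E2) [:- real (card W), 1:])"
    by (rule proots_pcompose_shift_eq) (use spec in \<open>simp add: lap_spectrum_def\<close>)
  then have "proots ([:- real (card W), 1:] * [:- real (card V1), 1:]) + lap_spectrum (join_V V1 W) (join_E V1 E1 W F)
      = proots ([:- real (card W), 1:] * [:- real (card V1), 1:]) + lap_spectrum (join_V V2 W) (join_E V2 E2 W F)"
    using lap_spectrum_join[OF G1 H W] lap_spectrum_join[OF G2 H W] by (simp only: card)
  then show ?thesis by simp
qed

section \<open>The Ihara polynomial\<close>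

definition ihara_matrix :: "'a set \<Rightarrow> ('a \<Rightarrow> 'a \<Rightarrow> bool) \<Rightarrow> 'a \<Rightarrow> 'a \<Rightarrow> real poly" where
  "ihara_matrix V E x y =
     [:if x = y then 1 else 0, - Defs.adj_mat E x y, if x = y then real (deg V E x) - 1 else 0:]"

definition ihara_poly :: "'a set \<Rightarrow> ('a \<Rightarrow> 'a \<Rightarrow> bool) \<Rightarrow> real poly" where
  "ihara_poly V E = det_on V (ihara_matrix V E)"

lemma ihara_zeta_eq_ihara_poly:
  "ihara_zeta V E =
     (let q = fps_of_poly [:1, 0, -1:]; n = card V; m = num_edges E
      in (if m \<le> n then q ^ (n - m) else inverse (q ^ (m - n))) * inverse (fps_of_poly (ihara_poly V E)))"
proof -
  have entry: "fps_of_poly (ihara_matrix V E x y) = (if x = y then 1 else 0) - fps_const (Defs.adj_mat E x y) * fps_X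
      + fps_const ((if x = y then real (deg V E x) else 0) - (if x = y then 1 else 0)) * fps_X ^ 2" for x y
    by (simp add: ihara_matrix_def fps_of_poly_pCons fps_ext power2_eq_square algebra_simps)
  have q: "fps_of_poly [:1, 0, -1:] = 1 - (fps_X :: real fps) ^ 2"
    by (simp add: fps_of_poly_pCons fps_ext power2_eq_square algebra_simps)
  show ?thesis
    unfolding ihara_zeta_def ihara_poly_def det_on_fps_of_poly[symmetric] by (simp only: entry q Let_def)
qed

lemma coeff_0_ihara_poly:
  assumes "finite V"
  shows "coeff (ihara_poly V E) 0 = 1"
proof -
  have "coeff (ihara_poly V E) 0 = det_on V (\<lambda>x y. coeff (ihara_matrix V E x y) 0)"
    unfolding ihara_poly_def det_on_def poly_0_coeff_0[symmetric] by (simp add: poly_sum poly_prod)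
  also have "\<dots> = det_on V (\<lambda>x y. if x = y then 1 else 0)"
    by (simp add: ihara_matrix_def)
  also have "\<dots> = 1"
    using det_on_diagonal[OF assms, of "\<lambda>_. 1"] by simp
  finally show ?thesis .
qed

lemma
  assumes "finite V"
  shows coeff_ihara_poly_top: "coeff (ihara_poly V E) (2 * card V) = (\<Prod>x\<in>V. real (deg V E x) - 1)"
    and degree_ihara_poly_le: "degree (ihara_poly V E) \<le> 2 * card V"
proof -
  have deg: "degree (ihara_matrix V E x y) \<le> 2" for x y
    by (simp add: ihara_matrix_def degree_pCons_le)
  have "coeff (ihara_poly V E) (2 * card V) = det_on V (\<lambda>x y. coeff (ihara_matrix V E x y) 2)"
    unfolding ihara_poly_def by (rule coeff_det_on_at_degree_bound[OF assms deg])
  also have "\<dots> = det_on V (\<lambda>x y. if x = y then real (deg V E x) - 1 else 0)"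
    by (simp add: ihara_matrix_def numeral_2_eq_2)
  finally show "coeff (ihara_poly V E) (2 * card V) = (\<Prod>x\<in>V. real (deg V E x) - 1)"
    by (simp add: det_on_diagonal[OF assms])
  show "degree (ihara_poly V E) \<le> 2 * card V"
    unfolding ihara_poly_def by (rule degree_det_on_le[OF assms deg])
qed

lemma ihara_zeta_mult_ihara_poly:
  assumes "finite V"
  shows "ihara_zeta V E * fps_of_poly (ihara_poly V E * [:1, 0, -1:] ^ num_edges E)
    = fps_of_poly [:1, 0, -1:] ^ card V"
proof -
  define q where "q = fps_of_poly [:1, 0, -1 :: real:]"
  define n where "n = card V"
  define m where "m = num_edges E"
  have q: "inverse (q ^ k) * q ^ k = 1" for k
    by (rule inverse_mult_eq_1) (simp add: q_def fps_nth_power_0)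
  have "(if m \<le> n then q ^ (n - m) else inverse (q ^ (m - n))) * q ^ m = q ^ n"
  proof (cases "m \<le> n")
    case False
    then have "q ^ m = q ^ (m - n) * q ^ n" by (simp add: power_add[symmetric])
    then show ?thesis using False q by (simp add: mult.assoc[symmetric])
  qed (simp add: power_add[symmetric])
  moreover have "inverse (fps_of_poly (ihara_poly V E)) * fps_of_poly (ihara_poly V E) = 1"
    by (rule inverse_mult_eq_1) (simp add: coeff_0_ihara_poly[OF assms])
  ultimately show ?thesis
    unfolding ihara_zeta_eq_ihara_poly Let_def q_def[symmetric] n_def[symmetric] m_def[symmetric]
    by (simp add: fps_of_poly_mult fps_of_poly_power q_def ac_simps)
qed

lemma degree_ihara_poly_eq:
  assumes "finite V" and "coeff (ihara_poly V E) (2 * card V) \<noteq> 0"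
  shows "degree (ihara_poly V E) = 2 * card V"
  using le_degree[OF assms(2)] degree_ihara_poly_le[OF assms(1)] by (rule antisym[rotated])

text \<open>Comparing degrees in \<open>ihara_poly V E * (1 - t^2)^(num_edges E)\<close> recovers the number
  of edges.\<close>
lemma ihara_poly_eq_if_ihara_zeta_eq:
  assumes fin1: "finite V1" and fin2: "finite V2" and card: "card V1 = card V2"
    and top1: "coeff (ihara_poly V1 E1) (2 * card V1) \<noteq> 0"
    and top2: "coeff (ihara_poly V2 E2) (2 * card V2) \<noteq> 0"
    and eq: "ihara_zeta V1 E1 = ihara_zeta V2 E2"
  shows "ihara_poly V1 E1 = ihara_poly V2 E2"
proof -
  define Q where "Q = [:1, 0, -1 :: real:]"
  have "fps_of_poly Q ^ card V1 \<noteq> 0"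
    by (metis Q_def fps_nth_power_0 coeff_pCons_0 fps_of_poly_nth one_neq_zero fps_zero_nth power_one)
  then have "ihara_zeta V1 E1 \<noteq> 0"
    using ihara_zeta_mult_ihara_poly[OF fin1, of E1] unfolding Q_def by auto
  then have P: "ihara_poly V1 E1 * Q ^ num_edges E1 = ihara_poly V2 E2 * Q ^ num_edges E2"
    using ihara_zeta_mult_ihara_poly[OF fin1, of E1] ihara_zeta_mult_ihara_poly[OF fin2, of E2]
    unfolding eq card Q_def by (metis fps_of_poly_eq_iff mult_left_cancel)
  have Q: "Q \<noteq> 0" "degree Q = 2" unfolding Q_def by (simp_all add: numeral_2_eq_2)
  have "ihara_poly V1 E1 \<noteq> 0" "ihara_poly V2 E2 \<noteq> 0" using top1 top2 by auto
  then have "degree (ihara_poly V1 E1 * Q ^ num_edges E1) = 2 * card V1 + num_edges E1 * 2"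
    and "degree (ihara_poly V2 E2 * Q ^ num_edges E2) = 2 * card V1 + num_edges E2 * 2"
    using degree_ihara_poly_eq[OF fin1 top1] degree_ihara_poly_eq[OF fin2 top2] Q card
    by (simp_all add: degree_mult_eq degree_power_eq)
  then have "num_edges E1 = num_edges E2" using P by simp
  then show ?thesis using P Q by simp
qed

section \<open>The degree polynomial\<close>

definition deg_prod_poly :: "'a set \<Rightarrow> ('a \<Rightarrow> 'a \<Rightarrow> bool) \<Rightarrow> real poly" where
  "deg_prod_poly V E = (\<Prod>v\<in>V. [:real (deg V E v) - 1, 1:])"

lemma poly_deg_prod_poly: "poly (deg_prod_poly V E) x = (\<Prod>v\<in>V. real (deg V E v) + x - 1)"
  unfolding deg_prod_poly_def poly_prod by (intro prod.cong) auto

lemma proots_deg_prod_poly: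
  assumes "finite V"
  shows "proots (deg_prod_poly V E) = image_mset (\<lambda>d. 1 - real d) (degree_seq V E)"
proof -
  have "proots (deg_prod_poly V E) = (\<Sum>v\<in>V. {#1 - real (deg V E v)#})"
    unfolding deg_prod_poly_def by (subst proots_prod) auto
  also have "\<dots> = image_mset (\<lambda>v. 1 - real (deg V E v)) (mset_set V)"
    by (simp add: sum_unfold_sum_mset)
  finally show ?thesis
    unfolding degree_seq_def by (simp add: image_mset.compositionality comp_def)
qed

lemma degree_seq_eq_if_deg_prod_poly_eq:
  assumes "finite V1" "finite V2" "deg_prod_poly V1 E1 = deg_prod_poly V2 E2"
  shows "degree_seq V1 E1 = degree_seq V2 E2"
proof -
  have inverse: "image_mset (\<lambda>y. nat \<lfloor>1 - y\<rfloor>) (image_mset (\<lambda>d. 1 - real d) X) = X" for X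
    by (simp add: image_mset.compositionality comp_def)
  show ?thesis
    using proots_deg_prod_poly[OF assms(1), of E1] proots_deg_prod_poly[OF assms(2), of E2] assms(3)
    by (metis inverse)
qed

lemma
  assumes "finite V"
  shows coeff_deg_prod_poly_card: "coeff (deg_prod_poly V E) (card V) = 1"
    and degree_deg_prod_poly_le: "degree (deg_prod_poly V E) \<le> card V"
  using coeff_prod_at_degree_bound[OF assms, of "\<lambda>v. [:real (deg V E v) - 1, 1:]" 1]
  unfolding deg_prod_poly_def by auto

lemma poly_deg_prod_poly_nonzero:
  assumes G: "graph V E" and m: "m \<ge> 1" and iso: "has_isolated V E \<longrightarrow> m \<ge> 2"
  shows "poly (deg_prod_poly V E) (real m) \<noteq> 0"
proof -
  have "real (deg V E v) + real m - 1 \<noteq> 0" if v: "v \<in> V" for v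
    using iso v m unfolding has_isolated_def by force
  then show ?thesis using graph_finite[OF G] by (simp add: poly_deg_prod_poly prod_zero_iff)
qed

lemma coeff_ihara_poly_join_top:
  assumes G: "graph V E" and H: "graph W F"
  shows "coeff (ihara_poly (join_V V W) (join_E V E W F)) (2 * card (join_V V W)) =
     poly (deg_prod_poly V E) (real (card W)) * poly (deg_prod_poly W F) (real (card V))"
proof -
  have finV: "finite V" and finW: "finite W" using G H graph_finite by blast+
  let ?d = "deg (join_V V W) (join_E V E W F)"
  have "coeff (ihara_poly (join_V V W) (join_E V E W F)) (2 * card (join_V V W))
      = (\<Prod>x\<in>join_V V W. real (?d x) - 1)"
    by (rule coeff_ihara_poly_top[OF finite_join_V[OF finV finW]])
  also have "\<dots> = (\<Prod>x\<in>Inl ` V. real (?d x) - 1) * (\<Prod>x\<in>Inr ` W. real (?d x) - 1)"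
    unfolding join_V_def by (rule prod.union_disjoint) (auto simp: finV finW)
  also have "\<dots> = poly (deg_prod_poly V E) (real (card W)) * poly (deg_prod_poly W F) (real (card V))"
    unfolding poly_deg_prod_poly
    by (simp add: prod.reindex deg_join_Inl[OF G H] deg_join_Inr[OF G H] algebra_simps cong: prod.cong)
  finally show ?thesis .
qed

lemma deg_prod_poly_eq_if_ihara_zeta_join_eq:
  assumes G1: "graph V1 E1" and G2: "graph V2 E2" and H: "graph W F" and W: "W \<noteq> {}"
    and card: "card V1 = card V2" and n: "card V1 \<ge> 2"
    and iso: "has_isolated V1 E1 \<or> has_isolated V2 E2 \<longrightarrow> card W \<ge> 2"
    and eq: "ihara_zeta (join_V V1 W) (join_E V1 E1 W F) = ihara_zeta (join_V V2 W) (join_E V2 E2 W F)"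
  shows "poly (deg_prod_poly V1 E1) (real (card W)) = poly (deg_prod_poly V2 E2) (real (card W))"
proof -
  have fin1: "finite V1" and fin2: "finite V2" and finW: "finite W" using G1 G2 H graph_finite by blast+
  have m: "card W \<ge> 1" using finW W by (simp add: Suc_le_eq card_gt_0_iff)
  have nz: "poly (deg_prod_poly V1 E1) (real (card W)) \<noteq> 0" "poly (deg_prod_poly V2 E2) (real (card W)) \<noteq> 0"
    "poly (deg_prod_poly W F) (real (card V1)) \<noteq> 0"
    using poly_deg_prod_poly_nonzero[OF G1 m] poly_deg_prod_poly_nonzero[OF G2 m]
      poly_deg_prod_poly_nonzero[OF H, of "card V1"] iso n by auto
  have "ihara_poly (join_V V1 W) (join_E V1 E1 W F) = ihara_poly (join_V V2 W) (join_E V2 E2 W F)"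
    using coeff_ihara_poly_join_top[OF G1 H] coeff_ihara_poly_join_top[OF G2 H] nz card
    by (intro ihara_poly_eq_if_ihara_zeta_eq[OF _ _ _ _ _ eq])
      (simp_all add: finite_join_V card_join_V fin1 fin2 finW)
  then show ?thesis
    using coeff_ihara_poly_join_top[OF G1 H] coeff_ihara_poly_join_top[OF G2 H] nz card
    by (simp add: card_join_V fin1 fin2 finW)
qed

lemma
  fixes p :: "real poly"
  assumes "p \<noteq> 0"
  shows finite_int_roots: "finite {k :: int. poly p (of_int k) = 0}"
    and card_int_roots_le_degree: "card {k :: int. poly p (of_int k) = 0} \<le> degree p"
proof -
  have sub: "of_int ` {k :: int. poly p (of_int k) = 0} \<subseteq> {x. poly p x = 0}" by auto
  have inj: "inj_on (of_int :: int \<Rightarrow> real) {k. poly p (of_int k) = 0}" by (auto simp: inj_on_def)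
  show "finite {k :: int. poly p (of_int k) = 0}"
    using finite_subset[OF sub poly_roots_finite[OF assms]] finite_image_iff[OF inj] by blast
  have "card {k :: int. poly p (of_int k) = 0} \<le> card {x. poly p x = 0}"
    using card_mono[OF poly_roots_finite[OF assms] sub] card_image[OF inj] by simp
  also have "\<dots> \<le> degree p" by (rule card_poly_roots_bound[OF assms])
  finally show "card {k :: int. poly p (of_int k) = 0} \<le> degree p" .
qed

lemma degree_diff_le_of_coeff_eq:
  assumes "degree p \<le> n" "degree q \<le> n" "coeff p n = coeff q n"
  shows "degree (p - q) \<le> n - 1"
proof (rule degree_le, intro allI impI)
  fix i assume "n - 1 < i"
  then consider "i = n" | "n < i" by linarith
  then show "coeff (p - q) i = 0" using assms by cases (auto simp: coeff_eq_0)
qed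

lemma degree_seq_card_le_1:
  assumes G: "graph V E" and c: "card V \<le> 1"
  shows "degree_seq V E = replicate_mset (card V) 0"
proof -
  have fin: "finite V" using G graph_finite by blast
  have "deg V E v = 0" if v: "v \<in> V" for v
  proof -
    have "V = {v}" using c v fin card_le_Suc0_iff_eq[OF fin] by auto
    then show ?thesis using G unfolding graph_def deg_def by auto
  qed
  then have "degree_seq V E = image_mset (\<lambda>_. 0) (mset_set V)"
    unfolding degree_seq_def by (intro image_mset_cong) (simp add: fin)
  then show ?thesis by (simp add: image_mset_const_eq fin)
qed

theorem proposition4p6:
  fixes V1 :: "'a set" and E1 :: "'a \<Rightarrow> 'a \<Rightarrow> bool"
    and V2 :: "'b set" and E2 :: "'b \<Rightarrow> 'b \<Rightarrow> bool" and n :: nat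
  assumes "graph V1 E1" and "graph V2 E2"
    and "card V1 = n" and "card V2 = n"
    and "lap_spectrum V1 E1 = lap_spectrum V2 E2"
    and "degree_seq V1 E1 \<noteq> degree_seq V2 E2"
  shows "(\<forall>(W :: nat set) F. graph W F \<and> W \<noteq> {} \<and>
             ((has_isolated V1 E1 \<or> has_isolated V2 E2) \<longrightarrow> card W \<ge> 2) \<longrightarrow>
           lap_spectrum (join_V V1 W) (join_E V1 E1 W F)
             = lap_spectrum (join_V V2 W) (join_E V2 E2 W F))
       \<and> (\<exists>S :: int set. finite S \<and> card S \<le> n - 1 \<and>
           (\<forall>(W :: nat set) F. graph W F \<and> W \<noteq> {} \<and>
             ((has_isolated V1 E1 \<or> has_isolated V2 E2) \<longrightarrow> card W \<ge> 2) \<and>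
             int (card W) \<notin> S \<longrightarrow>
             ihara_zeta (join_V V1 W) (join_E V1 E1 W F)
               \<noteq> ihara_zeta (join_V V2 W) (join_E V2 E2 W F)))"
proof -
  note G1 = assms(1) and G2 = assms(2)
  have fin1: "finite V1" and fin2: "finite V2" using G1 G2 graph_finite by blast+
  have n: "n \<ge> 2"
    using degree_seq_card_le_1[OF G1] degree_seq_card_le_1[OF G2] assms(3-6) by fastforce
  define D where "D = deg_prod_poly V1 E1 - deg_prod_poly V2 E2"
  define S where "S = {k :: int. poly D (of_int k) = 0}"
  have D: "D \<noteq> 0"
    using degree_seq_eq_if_deg_prod_poly_eq[OF fin1 fin2] assms(6) unfolding D_def by auto
  have "degree D \<le> n - 1"
    unfolding D_def using assms(3,4)
      coeff_deg_prod_poly_card[OF fin1, of E1] coeff_deg_prod_poly_card[OF fin2, of E2]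
      degree_deg_prod_poly_le[OF fin1, of E1] degree_deg_prod_poly_le[OF fin2, of E2]
    by (intro degree_diff_le_of_coeff_eq) simp_all
  then have "finite S \<and> card S \<le> n - 1"
    using finite_int_roots[OF D] card_int_roots_le_degree[OF D] unfolding S_def by simp
  moreover have "ihara_zeta (join_V V1 W) (join_E V1 E1 W F) \<noteq> ihara_zeta (join_V V2 W) (join_E V2 E2 W F)"
    if "graph W F" "W \<noteq> {}" "has_isolated V1 E1 \<or> has_isolated V2 E2 \<longrightarrow> card W \<ge> 2" "int (card W) \<notin> S"
    for W :: "nat set" and F
    using deg_prod_poly_eq_if_ihara_zeta_join_eq[OF G1 G2 that(1,2) _ _ that(3)] that(4) assms(3,4) n
    unfolding S_def D_def by auto
  ultimately show ?thesis
    using lap_spectrum_join_eq[OF G1 G2 _ _ _ assms(5)] assms(3,4) by (auto intro!: exI[of _ S])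
qed

end
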